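(* Let $\Omega\subseteq\mathcal{A}_n$ be a closed set which is uniformly transversally star-shaped with respect to $S\in\mathcal{A}_n$. Then for every $R\in\Omega$, the tensor $R+\alpha(S-R)$ lies in the interior of $\Omega$ for all $\alpha\in(0,1)$.
   Context: $\mathcal{A}_n$ is the (finite-dimensional Euclidean) space of algebraic curvature tensors on $\mathbb{R}^n$, i.e. symmetric bilinear forms on $\Lambda^2\mathbb{R}^n$ satisfying the first Bianchi identity, with scalar product $\langle R,S\rangle=\mathrm{tr}(R\circ S)$. A closed $\Omega\subseteq\mathcal{A}_n$ is uniformly transversally star-shaped with respect to $S$ if for every compact $K\subseteq\mathcal{A}_n$ there is $r>0$ such that for every $R\in K\cap\partial\Omega$ there is $\varepsilon_0>0$ with $R+\varepsilon B_r(S-R)\subseteq\Omega$ for all $\varepsilon\in[0,\varepsilon_0)$, where $B_r(v)$ is the open ball of radius $r$ around $v$. *)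

theory Defs
  imports "HOL-Analysis.Analysis"
begin

text \<open>Algebraic curvature tensors on R^n, represented by their components
  R(e_i,e_j,e_k,e_l) as 4-index arrays over a finite index type 'n (n = CARD('n)).
  A symmetric bilinear form on Lambda^2 R^n corresponds exactly to a 4-tensor that is
  antisymmetric in (i,j), antisymmetric in (k,l) and symmetric under the pair swap.\<close>

type_synonym 'n curv = "real ^ 'n ^ 'n ^ 'n ^ 'n"

definition alg_curv_tensors :: "'n::finite curv set" where
  "alg_curv_tensors = {R.
     (\<forall>i j k l. R$i$j$k$l = - (R$j$i$k$l)) \<and>
     (\<forall>i j k l. R$i$j$k$l = - (R$i$j$l$k)) \<and>
     (\<forall>i j k l. R$i$j$k$l = R$k$l$i$j) \<and>
     (\<forall>i j k l. R$i$j$k$l + R$j$k$i$l + R$k$i$j$l = 0)}"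

text \<open>The scalar product tr(R o S) of the forms on Lambda^2 R^n: with the orthonormal basis
  e_i /\ e_j (i<j) this is sum over i<j, k<l of R_ijkl S_ijkl, i.e. one quarter of the full sum.\<close>

definition curv_inner :: "'n::finite curv \<Rightarrow> 'n curv \<Rightarrow> real" where
  "curv_inner R S = (\<Sum>i\<in>UNIV. \<Sum>j\<in>UNIV. \<Sum>k\<in>UNIV. \<Sum>l\<in>UNIV. R$i$j$k$l * S$i$j$k$l) / 4"

definition curv_norm :: "'n::finite curv \<Rightarrow> real" where
  "curv_norm R = sqrt (curv_inner R R)"

definition curv_ball :: "'n::finite curv \<Rightarrow> real \<Rightarrow> 'n curv set" where
  "curv_ball v r = {w \<in> alg_curv_tensors. curv_norm (w - v) < r}"

definition curv_interior :: "'n::finite curv set \<Rightarrow> 'n curv set" where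
  "curv_interior \<Omega> = {x \<in> alg_curv_tensors. \<exists>r>0. curv_ball x r \<subseteq> \<Omega>}"

definition curv_closed :: "'n::finite curv set \<Rightarrow> bool" where
  "curv_closed \<Omega> \<longleftrightarrow> \<Omega> \<subseteq> alg_curv_tensors \<and>
     (\<forall>x \<in> alg_curv_tensors. (\<forall>r>0. curv_ball x r \<inter> \<Omega> \<noteq> {}) \<longrightarrow> x \<in> \<Omega>)"

definition curv_closure :: "'n::finite curv set \<Rightarrow> 'n curv set" where
  "curv_closure \<Omega> = {x \<in> alg_curv_tensors. \<forall>r>0. curv_ball x r \<inter> \<Omega> \<noteq> {}}"

definition curv_boundary :: "'n::finite curv set \<Rightarrow> 'n curv set" where
  "curv_boundary \<Omega> = curv_closure \<Omega> - curv_interior \<Omega>"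

definition unif_trans_star_shaped :: "'n::finite curv set \<Rightarrow> 'n curv \<Rightarrow> bool" where
  "unif_trans_star_shaped \<Omega> S \<longleftrightarrow>
     (\<forall>K. K \<subseteq> alg_curv_tensors \<and> compact K \<longrightarrow>
        (\<exists>r>0. \<forall>R \<in> K \<inter> curv_boundary \<Omega>. \<exists>\<epsilon>0>0. \<forall>\<epsilon>\<in>{0..<\<epsilon>0}.
            (\<lambda>v. R + \<epsilon> *\<^sub>R v) ` curv_ball (S - R) r \<subseteq> \<Omega>))"

end

theory Submission
  imports Defs
begin

(* For a target Q within distance r of S, the whole half-open segment from R towards Q stays in
   \<Omega>: at the first time s the segment would leave the closed set \<Omega>, the point P reached is either
   interior, or a boundary point, where transversal star-shapedness lets the segment continue
   because the remaining direction (1 - s)(Q - R) lies in B_r(S - P). Letting Q range over a ball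
   around S sweeps out a ball around R + \<alpha>(S - R). The radius r is the one for a compact ball
   around R containing all these segments. *)

lemma closed_path_continuation:
  fixes f :: "real \<Rightarrow> 'a::topological_space"
  assumes "closed \<Omega>" and "continuous_on {a..b} f" and "f a \<in> \<Omega>"
    and step: "\<And>s. s \<in> {a..<b} \<Longrightarrow> f s \<in> \<Omega> \<Longrightarrow> \<exists>\<delta>>0. \<forall>t\<in>{s<..<s+\<delta>}. f t \<in> \<Omega>"
  shows "f ` {a..b} \<subseteq> \<Omega>"
proof (rule ccontr)
  define B where "B = {t \<in> {a..b}. f t \<notin> \<Omega>}"
  define s where "s = Inf B"
  assume "\<not> f ` {a..b} \<subseteq> \<Omega>"
  then obtain t0 where t0: "t0 \<in> B" unfolding B_def by blast
  have "bdd_below B" unfolding B_def by (rule bdd_belowI[of _ a]) simp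
  then have s_le: "s \<le> t" if "t \<in> B" for t
    using that by (simp add: s_def cInf_lower)
  have "a \<le> s" unfolding s_def using t0 by (intro cInf_greatest) (auto simp: B_def)
  have "s \<le> b" using s_le t0 unfolding B_def by force
  have below: "f ` {a..<s} \<subseteq> \<Omega>"
    using s_le \<open>s \<le> b\<close> unfolding B_def by force
  have "f s \<in> \<Omega>"
  proof (cases "a = s")
    case False
    then have "f ` closure {a..<s} \<subseteq> \<Omega>"
      using \<open>a \<le> s\<close> \<open>s \<le> b\<close> below assms(1,2)
      by (intro image_closure_subset) (auto elim: continuous_on_subset)
    then show ?thesis using False \<open>a \<le> s\<close> by auto
  qed (use assms(3) in simp)
  then have "s < b"
    using s_le[OF t0] t0 \<open>s \<le> b\<close> unfolding B_def
    by (metis (mono_tags, lifting) atLeastAtMost_iff mem_Collect_eq order.antisym order_less_le)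
  then obtain \<delta> where "\<delta> > 0" and ahead: "\<forall>t\<in>{s<..<s+\<delta>}. f t \<in> \<Omega>"
    using step \<open>a \<le> s\<close> \<open>f s \<in> \<Omega>\<close> by force
  then obtain t where "t \<in> B" "t < s + \<delta>"
    using cInf_less_iff[OF _ \<open>bdd_below B\<close>, of "s + \<delta>"] t0 by (auto simp: s_def)
  with s_le ahead \<open>f s \<in> \<Omega>\<close> show False
    unfolding B_def by (metis greaterThanLessThan_iff mem_Collect_eq order_le_less)
qed

lemma curv_norm_eq_norm: "curv_norm R = norm R / 2"
proof -
  have "curv_inner R R = inner R R / 4"
    unfolding curv_inner_def inner_vec_def inner_real_def by simp
  moreover have "sqrt 4 = (2::real)"
    by (rule real_sqrt_unique) auto
  ultimately show ?thesis
    unfolding curv_norm_def by (simp only: real_sqrt_divide norm_eq_sqrt_inner)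
qed

lemma curv_norm_scaleR: "curv_norm (c *\<^sub>R R) = \<bar>c\<bar> * curv_norm R"
  by (simp add: curv_norm_eq_norm)

lemma alg_curv_tensors_add:
  "R \<in> alg_curv_tensors \<Longrightarrow> S \<in> alg_curv_tensors \<Longrightarrow> R + S \<in> alg_curv_tensors"
  unfolding alg_curv_tensors_def mem_Collect_eq vector_add_component
  by (smt (verit))

lemma alg_curv_tensors_scaleR: "R \<in> alg_curv_tensors \<Longrightarrow> c *\<^sub>R R \<in> alg_curv_tensors"
  unfolding alg_curv_tensors_def mem_Collect_eq vector_scaleR_component real_scaleR_def
  by (smt (verit) distrib_left mult_minus_right mult_zero_right)

lemma subspace_alg_curv_tensors: "subspace alg_curv_tensors"
proof -
  have "0 \<in> alg_curv_tensors"
    by (simp add: alg_curv_tensors_def)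
  then show ?thesis
    unfolding subspace_def using alg_curv_tensors_add alg_curv_tensors_scaleR by blast
qed

lemma closed_alg_curv_tensors: "closed alg_curv_tensors"
  using closed_subspace subspace_alg_curv_tensors by blast

lemma closed_if_curv_closed:
  assumes "curv_closed \<Omega>"
  shows "closed \<Omega>"
proof -
  have "x \<in> \<Omega>" if x: "x \<in> closure \<Omega>" for x
  proof -
    have "x \<in> alg_curv_tensors"
      using x assms closure_minimal[OF _ closed_alg_curv_tensors] unfolding curv_closed_def by blast
    moreover have "curv_ball x r \<inter> \<Omega> \<noteq> {}" if "r > 0" for r
    proof -
      obtain y where "y \<in> \<Omega>" "dist y x < 2 * r"
        using x \<open>r > 0\<close> unfolding closure_approachable by (meson mult_pos_pos zero_less_numeral)
      with assms show ?thesis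
        unfolding curv_closed_def curv_ball_def by (auto simp: curv_norm_eq_norm dist_norm)
    qed
    ultimately show ?thesis
      using assms unfolding curv_closed_def by blast
  qed
  then show ?thesis
    using closure_subset_eq by blast
qed

lemma curv_boundary_if_not_interior:
  assumes "\<Omega> \<subseteq> alg_curv_tensors" and "x \<in> \<Omega>" and "x \<notin> curv_interior \<Omega>"
  shows "x \<in> curv_boundary \<Omega>"
proof -
  have "x \<in> curv_ball x r" if "r > 0" for r
    using assms that unfolding curv_ball_def by (auto simp: curv_norm_eq_norm)
  then show ?thesis
    using assms unfolding curv_boundary_def curv_closure_def by blast
qed

lemma curv_interior_ray:
  assumes "x \<in> curv_interior \<Omega>" and "d \<in> alg_curv_tensors"
  shows "\<exists>\<delta>>0. \<forall>\<tau>\<in>{0<..<\<delta>}. x + \<tau> *\<^sub>R d \<in> \<Omega>"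
proof -
  obtain \<rho> where "\<rho> > 0" and ball: "curv_ball x \<rho> \<subseteq> \<Omega>" and x_mem: "x \<in> alg_curv_tensors"
    using assms(1) unfolding curv_interior_def by blast
  define \<delta> where "\<delta> = \<rho> / (curv_norm d + 1)"
  have "curv_norm d \<ge> 0"
    by (simp add: curv_norm_eq_norm)
  have "x + \<tau> *\<^sub>R d \<in> \<Omega>" if \<tau>: "\<tau> \<in> {0<..<\<delta>}" for \<tau>
  proof -
    have "\<tau> * curv_norm d \<le> \<tau> * (curv_norm d + 1)"
      using \<tau> by (intro mult_left_mono) auto
    also have "\<dots> < \<delta> * (curv_norm d + 1)"
      using \<tau> \<open>curv_norm d \<ge> 0\<close> by (intro mult_strict_right_mono) auto
    also have "\<dots> = \<rho>"
      using \<open>curv_norm d \<ge> 0\<close> unfolding \<delta>_def by simp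
    finally have "x + \<tau> *\<^sub>R d \<in> curv_ball x \<rho>"
      using \<tau> x_mem assms(2) unfolding curv_ball_def
      by (simp add: curv_norm_scaleR alg_curv_tensors_add alg_curv_tensors_scaleR)
    then show ?thesis
      using ball by blast
  qed
  moreover have "\<delta> > 0"
    using \<open>\<rho> > 0\<close> \<open>curv_norm d \<ge> 0\<close> unfolding \<delta>_def by simp
  ultimately show ?thesis
    by blast
qed

lemma curv_ray_continuation:
  assumes "\<Omega> \<subseteq> alg_curv_tensors" and "P \<in> \<Omega>" and "d \<in> alg_curv_tensors"
    and "c > 0" and "curv_norm (c *\<^sub>R d - (S - P)) < r"
    and star: "P \<in> curv_boundary \<Omega> \<Longrightarrow> \<exists>\<epsilon>0>0. \<forall>\<epsilon>\<in>{0..<\<epsilon>0}.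
            (\<lambda>v. P + \<epsilon> *\<^sub>R v) ` curv_ball (S - P) r \<subseteq> \<Omega>"
  shows "\<exists>\<delta>>0. \<forall>\<tau>\<in>{0<..<\<delta>}. P + \<tau> *\<^sub>R d \<in> \<Omega>"
proof (cases "P \<in> curv_interior \<Omega>")
  case True
  then show ?thesis
    using assms(3) by (rule curv_interior_ray)
next
  case False
  then obtain \<epsilon>0 where "\<epsilon>0 > 0"
    and cone: "\<forall>\<epsilon>\<in>{0..<\<epsilon>0}. (\<lambda>v. P + \<epsilon> *\<^sub>R v) ` curv_ball (S - P) r \<subseteq> \<Omega>"
    using star curv_boundary_if_not_interior[OF assms(1,2)] by blast
  have "c *\<^sub>R d \<in> curv_ball (S - P) r"
    using assms(3,5) alg_curv_tensors_scaleR unfolding curv_ball_def by blast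
  have "P + \<tau> *\<^sub>R d \<in> \<Omega>" if \<tau>: "\<tau> \<in> {0<..<\<epsilon>0 * c}" for \<tau>
  proof -
    have "\<tau> / c \<in> {0..<\<epsilon>0}"
      using \<tau> \<open>c > 0\<close> by (simp add: divide_simps)
    then have "P + (\<tau> / c) *\<^sub>R (c *\<^sub>R d) \<in> \<Omega>"
      using cone \<open>c *\<^sub>R d \<in> curv_ball (S - P) r\<close> by blast
    then show ?thesis
      using \<open>c > 0\<close> by simp
  qed
  then show ?thesis
    using \<open>\<epsilon>0 > 0\<close> \<open>c > 0\<close> by (intro exI[of _ "\<epsilon>0 * c"]) simp
qed

lemma curv_closed_segment_mem:
  assumes "curv_closed \<Omega>" and "R \<in> \<Omega>" and "Q \<in> alg_curv_tensors"
    and "curv_norm (Q - S) < r"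
    and star: "\<forall>P \<in> closed_segment R Q \<inter> curv_boundary \<Omega>. \<exists>\<epsilon>0>0. \<forall>\<epsilon>\<in>{0..<\<epsilon>0}.
            (\<lambda>v. P + \<epsilon> *\<^sub>R v) ` curv_ball (S - P) r \<subseteq> \<Omega>"
    and "0 \<le> \<alpha>" and "\<alpha> < 1"
  shows "R + \<alpha> *\<^sub>R (Q - R) \<in> \<Omega>"
proof -
  define d where "d = Q - R"
  define f where "f t = R + t *\<^sub>R d" for t
  have \<Omega>_sub: "\<Omega> \<subseteq> alg_curv_tensors"
    using assms(1) unfolding curv_closed_def by blast
  have d_mem: "d \<in> alg_curv_tensors"
    using assms(2,3) \<Omega>_sub subspace_diff[OF subspace_alg_curv_tensors] unfolding d_def by blast
  have "f ` {0..\<alpha>} \<subseteq> \<Omega>"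
  proof (rule closed_path_continuation)
    show "closed \<Omega>"
      using assms(1) by (rule closed_if_curv_closed)
    show "continuous_on {0..\<alpha>} f"
      unfolding f_def by (intro continuous_intros)
    show "f 0 \<in> \<Omega>"
      using assms(2) by (simp add: f_def)
  next
    fix s assume s: "s \<in> {0..<\<alpha>}" and "f s \<in> \<Omega>"
    have "f s \<in> closed_segment R Q"
      using s \<open>\<alpha> < 1\<close> unfolding closed_segment_def f_def d_def
      by (intro CollectI exI[of _ s]) (auto simp: algebra_simps)
    (* the rest (1 - s) d of the segment differs from S - f s by exactly Q - S *)
    moreover have "curv_norm ((1 - s) *\<^sub>R d - (S - f s)) < r"
      using \<open>curv_norm (Q - S) < r\<close> unfolding f_def d_def by (simp add: algebra_simps)
    ultimately obtain \<delta> where "\<delta> > 0" and ray: "\<forall>\<tau>\<in>{0<..<\<delta>}. f s + \<tau> *\<^sub>R d \<in> \<Omega>"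
      using curv_ray_continuation[OF \<Omega>_sub \<open>f s \<in> \<Omega>\<close> d_mem, where c = "1 - s" and S = S and r = r] s \<open>\<alpha> < 1\<close> star
      by auto
    have "f t \<in> \<Omega>" if "t \<in> {s<..<s + \<delta>}" for t
    proof -
      have "f s + (t - s) *\<^sub>R d \<in> \<Omega>"
        using ray that by simp
      moreover have "f s + (t - s) *\<^sub>R d = f t"
        unfolding f_def by (simp add: algebra_simps)
      ultimately show ?thesis
        by simp
    qed
    then show "\<exists>\<delta>>0. \<forall>t\<in>{s<..<s + \<delta>}. f t \<in> \<Omega>"
      using \<open>\<delta> > 0\<close> by blast
  qed
  then have "f \<alpha> \<in> \<Omega>"
    using \<open>0 \<le> \<alpha>\<close> by (auto simp: image_subset_iff)
  then show ?thesis
    by (simp add: f_def d_def)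
qed

lemma affine_image_curv_ball:
  assumes "R \<in> alg_curv_tensors" and "S \<in> alg_curv_tensors" and "\<alpha> > 0" and "\<rho> > 0"
    and "\<And>Q. Q \<in> curv_ball S \<rho> \<Longrightarrow> R + \<alpha> *\<^sub>R (Q - R) \<in> \<Omega>"
  shows "R + \<alpha> *\<^sub>R (S - R) \<in> curv_interior \<Omega>"
proof -
  have "w \<in> \<Omega>" if w: "w \<in> curv_ball (R + \<alpha> *\<^sub>R (S - R)) (\<alpha> * \<rho>)" for w
  proof -
    define Q where "Q = R + (1 / \<alpha>) *\<^sub>R (w - R)"
    have "Q \<in> alg_curv_tensors"
      using w assms(1) unfolding Q_def curv_ball_def
      by (simp add: subspace_add subspace_diff subspace_scale subspace_alg_curv_tensors)
    moreover have "Q - S = (1 / \<alpha>) *\<^sub>R (w - (R + \<alpha> *\<^sub>R (S - R)))"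
      using \<open>\<alpha> > 0\<close> unfolding Q_def by (simp add: algebra_simps)
    then have "curv_norm (Q - S) < \<rho>"
      using w \<open>\<alpha> > 0\<close> unfolding curv_ball_def
      by (simp add: curv_norm_scaleR divide_simps mult.commute)
    ultimately have "R + \<alpha> *\<^sub>R (Q - R) \<in> \<Omega>"
      using assms(5) unfolding curv_ball_def by simp
    moreover have "R + \<alpha> *\<^sub>R (Q - R) = w"
      using \<open>\<alpha> > 0\<close> unfolding Q_def by simp
    ultimately show ?thesis
      by simp
  qed
  moreover have "R + \<alpha> *\<^sub>R (S - R) \<in> alg_curv_tensors"
    using assms(1,2) by (simp add: subspace_add subspace_diff subspace_scale subspace_alg_curv_tensors)
  moreover have "\<alpha> * \<rho> > 0"
    using assms(3,4) by simp
  ultimately show ?thesis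
    unfolding curv_interior_def by blast
qed

lemma closed_segment_subset_curv_cball:
  assumes "R \<in> alg_curv_tensors" and "Q \<in> alg_curv_tensors" and "norm (Q - R) \<le> M"
  shows "closed_segment R Q \<subseteq> alg_curv_tensors \<inter> cball R M"
proof (rule closed_segment_subset)
  show "convex (alg_curv_tensors \<inter> cball R M)"
    by (intro convex_Int subspace_imp_convex[OF subspace_alg_curv_tensors] convex_cball)
  show "R \<in> alg_curv_tensors \<inter> cball R M" "Q \<in> alg_curv_tensors \<inter> cball R M"
    using assms order_trans[OF norm_ge_zero assms(3)] by (auto simp: dist_norm norm_minus_commute)
qed

theorem lemma4p6:
  fixes \<Omega> :: "'n::finite curv set" and S :: "'n curv"
  assumes "S \<in> alg_curv_tensors"
    and "curv_closed \<Omega>"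
    and "unif_trans_star_shaped \<Omega> S"
    and "R \<in> \<Omega>"
    and "0 < \<alpha>" and "\<alpha> < 1"
  shows "R + \<alpha> *\<^sub>R (S - R) \<in> curv_interior \<Omega>"
proof -
  have R_mem: "R \<in> alg_curv_tensors"
    using assms(2,4) unfolding curv_closed_def by blast
  define K where "K = alg_curv_tensors \<inter> cball R (norm (S - R) + 2)"
  have "compact K" and "K \<subseteq> alg_curv_tensors"
    unfolding K_def by (auto intro: closed_Int_compact closed_alg_curv_tensors)
  then obtain r where "r > 0" and star: "\<forall>P \<in> K \<inter> curv_boundary \<Omega>. \<exists>\<epsilon>0>0. \<forall>\<epsilon>\<in>{0..<\<epsilon>0}.
      (\<lambda>v. P + \<epsilon> *\<^sub>R v) ` curv_ball (S - P) r \<subseteq> \<Omega>"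
    using assms(3) unfolding unif_trans_star_shaped_def by blast
  (* K has to be chosen before r is known, hence the cap min r 1 keeping all segments inside K *)
  have "R + \<alpha> *\<^sub>R (Q - R) \<in> \<Omega>" if "Q \<in> curv_ball S (min r 1)" for Q
  proof -
    have Q_mem: "Q \<in> alg_curv_tensors" and "curv_norm (Q - S) < min r 1"
      using that unfolding curv_ball_def by auto
    have "norm (Q - R) \<le> norm (S - R) + norm (Q - S)"
      using norm_triangle_ineq[of "S - R" "Q - S"] by simp
    also have "\<dots> \<le> norm (S - R) + 2"
      using \<open>curv_norm (Q - S) < min r 1\<close> unfolding curv_norm_eq_norm by simp
    finally have "closed_segment R Q \<subseteq> K"
      unfolding K_def by (intro closed_segment_subset_curv_cball R_mem Q_mem)
    then show ?thesis
      using star \<open>curv_norm (Q - S) < min r 1\<close> assms(5,6)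
      by (intro curv_closed_segment_mem[OF assms(2,4) Q_mem, where S = S and r = r]) auto
  qed
  then show ?thesis
    using R_mem assms(1,5) \<open>r > 0\<close> by (intro affine_image_curv_ball[where \<rho> = "min r 1"]) auto
qed

end
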